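(* Let $p,N\in\mathbb{N}$, $x_0<\cdots<x_N$, data $y_{n,2k}\in\mathbb{R}$ ($n=0,\dots,N$, $k=0,\dots,p$), and for $n=1,\dots,N$ and $\alpha_n\in\mathbb{R}$ let $$q_n(\alpha_n,x)=\sum_{l=0}^p\Big[\big(a_n^{2l}y_{n-1,2l}-\alpha_n y_{0,2l}\big)\Lambda_l\Big(\tfrac{x_N-x}{x_N-x_0}\Big)+\big(a_n^{2l}y_{n,2l}-\alpha_n y_{N,2l}\big)\Lambda_l\Big(\tfrac{x-x_0}{x_N-x_0}\Big)\Big](x_N-x_0)^{2l}.$$ Then for every $k=0,1,\dots,p$ and every $x\in[x_0,x_N]$, $$\left|\frac{\partial^{2k+1}}{\partial\alpha_n\,\partial x^{2k}}q_n(\alpha_n,x)\right|\le\frac{2\rho\pi}{3}\sum_{l=0}^{p-k}\Big(\frac{x_N-x_0}{\pi}\Big)^{2l}.$$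
   Context: Lidstone polynomials $\Lambda_l$ are defined by $\Lambda_0(x)=x$, $\Lambda_l''=\Lambda_{l-1}$, $\Lambda_l(0)=\Lambda_l(1)=0$ for $l\ge1$. $a_n=\frac{x_n-x_{n-1}}{x_N-x_0}$. $\rho=\max_{0\le k\le p}\max\{|y_{0,2k}|,|y_{N,2k}|\}$. *)

theory Defs
  imports "HOL-Analysis.Analysis" "HOL-Computational_Algebra.Polynomial"
begin

fun lidstone :: "nat \<Rightarrow> real poly" where
  "lidstone 0 = [:0, 1:]"
| "lidstone (Suc l) =
     (THE P. pderiv (pderiv P) = lidstone l \<and> poly P 0 = 0 \<and> poly P 1 = 0)"

abbreviation Lambda :: "nat \<Rightarrow> real \<Rightarrow> real" where
  "Lambda l t \<equiv> poly (lidstone l) t"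

definition a_coef :: "(nat \<Rightarrow> real) \<Rightarrow> nat \<Rightarrow> nat \<Rightarrow> real" where
  "a_coef xs N n = (xs n - xs (n - 1)) / (xs N - xs 0)"

definition rho :: "(nat \<Rightarrow> nat \<Rightarrow> real) \<Rightarrow> nat \<Rightarrow> nat \<Rightarrow> real" where
  "rho y p N = Max ((\<lambda>k. max \<bar>y 0 (2*k)\<bar> \<bar>y N (2*k)\<bar>) ` {0..p})"

definition q_fun :: "nat \<Rightarrow> nat \<Rightarrow> (nat \<Rightarrow> real) \<Rightarrow> (nat \<Rightarrow> nat \<Rightarrow> real)
    \<Rightarrow> nat \<Rightarrow> real \<Rightarrow> real \<Rightarrow> real" where
  "q_fun p N xs y n \<alpha> x =
     (\<Sum>l=0..p.
        ((a_coef xs N n ^ (2*l) * y (n - 1) (2*l) - \<alpha> * y 0 (2*l))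
            * Lambda l ((xs N - x) / (xs N - xs 0))
         + (a_coef xs N n ^ (2*l) * y n (2*l) - \<alpha> * y N (2*l))
            * Lambda l ((x - xs 0) / (xs N - xs 0)))
        * (xs N - xs 0) ^ (2*l))"

end

theory Submission
  imports Defs
begin

(* The function q_n(alpha, x) is a polynomial in x that depends affinely on alpha:
   q_n = A - alpha * B, where B is the "boundary" polynomial
     B(x) = sum_l (y_{0,2l} Lambda_l((x_N - x)/L) + y_{N,2l} Lambda_l((x - x_0)/L)) L^(2l),
   L = x_N - x_0.  Hence the mixed derivative is -B^(2k)(x).  Since Lambda_l'' = Lambda_(l-1),
   differentiating 2k times shifts the index by k and eats the factor L^(2k), so
     B^(2k)(x) = sum_{j <= p-k} (y_{0,2(j+k)} Lambda_j(1-u) + y_{N,2(j+k)} Lambda_j(u)) L^(2j),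
   with u = (x - x_0)/L in [0,1].  The theorem then follows from the pointwise estimate
     |Lambda_j(u)| + |Lambda_j(1-u)| <= (2 pi / 3) / pi^(2j)   on [0,1].
   This estimate is proved via the signed polynomials (-1)^j Lambda_j, which are nonnegative
   on [0,1] (they are concave with zero ends), and their symmetrisations T_j(u), for which
   T_(j+1)(u) <= 2/(3 pi^(2j+1)) sin(pi u) follows by induction from a concavity comparison,
   the base case being the elementary inequality sin(pi u) >= (3 pi / 4) u (1 - u). *)

lemma pderiv_sum: "pderiv (sum f A) = (\<Sum>i\<in>A. pderiv (f i))"
  by (induct A rule: infinite_finite_induct) (auto simp: pderiv_add)

lemma pderiv_surj: "\<exists>P. pderiv P = (Q :: real poly)"
proof -
  let ?P = "\<Sum>i\<le>degree Q. monom (coeff Q i / of_nat (Suc i)) (Suc i)"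
  have "pderiv ?P = (\<Sum>i\<le>degree Q. monom (coeff Q i) i)"
    by (simp add: pderiv_sum pderiv_monom del: of_nat_Suc)
  also have "\<dots> = Q" by (rule poly_as_sum_of_monoms)
  finally show ?thesis by blast
qed

lemma pderiv2_eq_0_vanishing_ends:
  fixes D :: "real poly"
  assumes "pderiv (pderiv D) = 0" "poly D 0 = 0" "poly D 1 = 0"
  shows "D = 0"
proof -
  have "degree (pderiv D) = 0" using assms(1) pderiv_eq_0_iff by blast
  hence deg: "degree D \<le> 1" by (simp add: degree_pderiv)
  have affine: "poly D t = coeff D 0 + coeff D 1 * t" for t
  proof -
    have "poly D t = (\<Sum>i\<le>1. coeff D i * t ^ i)"
      unfolding poly_altdef by (rule sum.mono_neutral_left) (use deg in \<open>auto simp: coeff_eq_0\<close>)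
    thus ?thesis by simp
  qed
  have c0: "coeff D 0 = 0" using assms(2) affine[of 0] by simp
  have c1: "coeff D 1 = 0" using assms(3) affine[of 1] c0 by simp
  show ?thesis
  proof (rule poly_eqI)
    fix i show "coeff D i = coeff 0 i"
      using c0 c1 deg coeff_eq_0[of D i] by (cases i; cases "i - 1"; auto)
  qed
qed

(* The problem P'' = Q, P(0) = P(1) = 0 has exactly one polynomial solution, so the
   definite description in the definition of lidstone is well defined. *)
lemma lidstone_step_unique:
  "\<exists>!P. pderiv (pderiv P) = Q \<and> poly P 0 = 0 \<and> poly P 1 = (0::real)"
proof -
  obtain P1 where P1: "pderiv P1 = Q" using pderiv_surj by blast
  obtain P0 where P0: "pderiv P0 = P1" using pderiv_surj by blast
  define P where "P = P0 + [:- poly P0 0, poly P0 0 - poly P0 1:]"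
  have P: "pderiv (pderiv P) = Q \<and> poly P 0 = 0 \<and> poly P 1 = 0"
    unfolding P_def using P0 P1 by (simp add: pderiv_add pderiv_pCons)
  moreover have "R = P" if "pderiv (pderiv R) = Q \<and> poly R 0 = 0 \<and> poly R 1 = 0" for R
    using pderiv2_eq_0_vanishing_ends[of "R - P"] that P by (simp add: pderiv_diff)
  ultimately show ?thesis by blast
qed

lemma lidstone_Suc:
  "pderiv (pderiv (lidstone (Suc l))) = lidstone l"
  "poly (lidstone (Suc l)) 0 = 0" "poly (lidstone (Suc l)) 1 = 0"
  using theI'[OF lidstone_step_unique[of "lidstone l"]] by simp_all

declare lidstone.simps(2)[simp del]

lemma higher_pderiv_add:
  "(pderiv ^^ m) (p + q) = (pderiv ^^ m) p + (pderiv ^^ m) (q :: real poly)"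
  by (induction m) (simp_all add: pderiv_add)

lemma higher_pderiv_diff:
  "(pderiv ^^ m) (p - q) = (pderiv ^^ m) p - (pderiv ^^ m) (q :: real poly)"
  by (induction m) (simp_all add: pderiv_diff)

lemma higher_pderiv_smult:
  "(pderiv ^^ m) (smult c p) = smult c ((pderiv ^^ m) (p :: real poly))"
  by (induction m) (simp_all add: pderiv_smult)

lemma higher_pderiv_sum:
  "(pderiv ^^ m) (sum f A) = (\<Sum>i\<in>A. (pderiv ^^ m) (f i :: real poly))"
  by (induction m) (simp_all add: pderiv_sum)

lemma higher_pderiv_pcompose_affine:
  "(pderiv ^^ m) (pcompose p [:b, a:]) = smult (a ^ m) (pcompose ((pderiv ^^ m) p) [:b, a:])"
  by (induction m) (simp_all add: pderiv_smult pderiv_pcompose pderiv_pCons mult.commute)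

lemma higher_deriv_poly: "(deriv ^^ m) (poly p) = poly ((pderiv ^^ m) (p :: real poly))"
proof (induction m)
  case (Suc m)
  have "deriv (poly q) = poly (pderiv q)" for q :: "real poly"
    by (rule ext) (rule DERIV_imp_deriv, simp)
  with Suc show ?case by simp
qed simp

lemma higher_pderiv_lidstone:
  "(pderiv ^^ (2*k)) (lidstone l) = (if k \<le> l then lidstone (l - k) else 0)"
proof (induction k arbitrary: l)
  case (Suc k)
  have split: "(pderiv ^^ (2 * Suc k)) P = (pderiv ^^ (2*k)) (pderiv (pderiv P))" for P :: "real poly"
    by (simp add: funpow_Suc_right del: funpow.simps)
  show ?case
  proof (cases l)
    case 0
    have "(pderiv ^^ m) 0 = (0 :: real poly)" for m by (induction m) simp_all
    then show ?thesis using 0 by (simp only: split) (simp add: pderiv_pCons)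
  next
    case (Suc l')
    then show ?thesis by (simp only: split lidstone_Suc Suc.IH) simp
  qed
qed simp

lemma sin_ge_cubic: "0 \<le> (x::real) \<Longrightarrow> x - x^3/6 \<le> sin x"
proof -
  assume x: "0 \<le> x"
  have "\<bar>sin x - (\<Sum>m<3. sin_coeff m * x ^ m)\<bar> \<le> inverse (fact 3) * \<bar>x\<bar> ^ 3"
    using Maclaurin_sin_bound[of x 3] .
  moreover have "(\<Sum>m<3. sin_coeff m * x ^ m) = x"
    by (simp add: numeral_3_eq_3 sin_coeff_Suc cos_coeff_def)
  moreover have "inverse (fact 3) * \<bar>x\<bar> ^ 3 = x^3/6"
    using x by (simp add: fact_numeral)
  ultimately show ?thesis by linarith
qed

lemma sin_pi_ge_parabola_half:
  assumes s: "0 \<le> s" "s \<le> 1/2"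
  shows "(3*pi/4) * (s*(1-s)) \<le> sin (pi* s)"
proof -
  have "pi \<le> 16/5" using pi_approx(2) by simp
  hence "pi * pi \<le> (16/5) * (16/5)" using pi_gt_zero by (intro mult_mono) auto
  hence "pi^2 \<le> 256/25" by (simp add: power2_eq_square)
  hence "pi^2 * s^2 \<le> (256/25) * s^2" by (intro mult_right_mono) auto
  moreover have "s^2 \<le> s / 2" using s mult_left_mono[of s "1/2" s] by (simp add: power2_eq_square)
  ultimately have "pi^2 * s^2 / 6 \<le> (64/75) * s" by linarith
  moreover have "(3/4) * (1 - s) = 3/4 - 3 * s / 4" by simp
  ultimately have q: "(3/4)*(1-s) \<le> 1 - pi^2 * s^2/6" using s by linarith
  have "(3*pi/4) * (s*(1-s)) = (pi* s) * ((3/4)*(1-s))" by simp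
  also have "\<dots> \<le> (pi* s) * (1 - pi^2 * s^2/6)" using q s by (intro mult_left_mono) auto
  also have "\<dots> = (pi* s) - (pi* s)^3/6" by (simp add: algebra_simps power2_eq_square power3_eq_cube)
  also have "\<dots> \<le> sin (pi* s)" using s by (intro sin_ge_cubic) auto
  finally show ?thesis .
qed

lemma sin_pi_ge_parabola:
  assumes s: "0 \<le> s" "s \<le> 1"
  shows "(3*pi/4) * (s*(1-s)) \<le> sin (pi* s)"
proof (cases "s \<le> 1/2")
  case True then show ?thesis using s sin_pi_ge_parabola_half by auto
next
  case False
  have "(3*pi/4) * ((1-s)*(1-(1-s))) \<le> sin (pi*(1-s))"
    using False s by (intro sin_pi_ge_parabola_half) auto
  moreover have "sin (pi*(1-s)) = sin (pi* s)"
    by (simp add: right_diff_distrib sin_diff)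
  ultimately show ?thesis by (simp add: mult.commute)
qed

lemma concave_vanishing_ends_nonneg:
  fixes f f' f'' :: "real \<Rightarrow> real"
  assumes d1: "\<And>x. DERIV f x :> f' x" and d2: "\<And>x. DERIV f' x :> f'' x"
    and concave: "\<And>x. x \<in> {0..1} \<Longrightarrow> f'' x \<le> 0"
    and ends: "f 0 = 0" "f 1 = 0" and x: "x \<in> {0..1}"
  shows "0 \<le> f x"
proof -
  have "concave_on {0..1} f"
    by (rule f''_le0_imp_concave[where f'=f' and f''=f'']) (use d1 d2 concave in auto)
  from concave_onD[OF this, of x 0 1] x
  have "(1 - x) * f 0 + x * f 1 \<le> f ((1 - x) *\<^sub>R 0 + x *\<^sub>R 1)" by auto
  thus ?thesis using ends by simp
qed

definition lidstone_signed :: "nat \<Rightarrow> real poly" where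
  "lidstone_signed j = smult ((-1)^j) (lidstone j)"

definition lidstone_sym :: "nat \<Rightarrow> real poly" where
  "lidstone_sym j = lidstone_signed j + pcompose (lidstone_signed j) [:1, -1:]"

lemma lidstone_signed_Suc:
  "pderiv (pderiv (lidstone_signed (Suc j))) = - lidstone_signed j"
  "poly (lidstone_signed (Suc j)) 0 = 0" "poly (lidstone_signed (Suc j)) 1 = 0"
  unfolding lidstone_signed_def by (simp_all add: pderiv_smult pderiv_minus lidstone_Suc)

(* (-1)^j Lambda_j is nonnegative on [0,1]: by induction, each is concave with zero ends. *)
lemma lidstone_signed_nonneg: "s \<in> {0..1} \<Longrightarrow> 0 \<le> poly (lidstone_signed j) s"
proof (induction j arbitrary: s)
  case 0 then show ?case by (simp add: lidstone_signed_def)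
next
  case (Suc j)
  let ?P = "lidstone_signed (Suc j)"
  have "DERIV (poly (pderiv ?P)) x :> - poly (lidstone_signed j) x" for x
    using poly_DERIV[of "pderiv ?P" x] by (simp add: lidstone_signed_Suc)
  with Suc show ?case
    by (intro concave_vanishing_ends_nonneg[where f="poly ?P" and f'="poly (pderiv ?P)"])
       (auto simp: lidstone_signed_Suc)
qed

lemma poly_lidstone_sym: "poly (lidstone_sym j) s = poly (lidstone_signed j) s + poly (lidstone_signed j) (1 - s)"
  unfolding lidstone_sym_def by (simp add: poly_pcompose)

lemma lidstone_sym_Suc:
  "pderiv (pderiv (lidstone_sym (Suc j))) = - lidstone_sym j"
  "poly (lidstone_sym (Suc j)) 0 = 0" "poly (lidstone_sym (Suc j)) 1 = 0"
proof -
  have "pderiv (pderiv (pcompose P [:1, -1:])) = pcompose (pderiv (pderiv P)) [:1, -1::real:]" for P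
    using higher_pderiv_pcompose_affine[of 2 P 1 "-1"] by (simp add: numeral_2_eq_2)
  thus "pderiv (pderiv (lidstone_sym (Suc j))) = - lidstone_sym j"
    unfolding lidstone_sym_def by (simp add: pderiv_add lidstone_signed_Suc pcompose_uminus)
qed (simp_all add: poly_lidstone_sym lidstone_signed_Suc)

lemma lidstone_sym_0: "lidstone_sym 0 = 1"
  unfolding lidstone_sym_def lidstone_signed_def by (simp add: pcompose_pCons one_pCons)

lemma poly_lidstone_sym_1: "poly (lidstone_sym (Suc 0)) s = s * (1 - s) / 2"
proof -
  define D where "D = lidstone_sym (Suc 0) - [:0, 1/2, -1/2:]"
  have "pderiv (pderiv D) = 0"
    unfolding D_def using lidstone_sym_Suc(1)[of 0]
    by (simp add: pderiv_diff lidstone_sym_0 pderiv_pCons one_pCons)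
  moreover have "poly D 0 = 0" "poly D 1 = 0"
    unfolding D_def using lidstone_sym_Suc(2,3)[of 0] by simp_all
  ultimately have "D = 0" by (rule pderiv2_eq_0_vanishing_ends)
  hence "poly (lidstone_sym (Suc 0)) s = poly [:0, 1/2, -1/2:] s" unfolding D_def by simp
  thus ?thesis by (simp add: algebra_simps)
qed

(* Comparison with the eigenfunction sin (pi u) of -d^2/du^2: the difference
   C sin (pi u) - T_(j+2)(u) is concave with zero ends by the induction hypothesis. *)
lemma lidstone_sym_le_sin:
  "s \<in> {0..1} \<Longrightarrow> poly (lidstone_sym (Suc j)) s \<le> 2 / (3 * pi^(2*j+1)) * sin (pi* s)"
proof (induction j arbitrary: s)
  case 0
  then show ?case
    using sin_pi_ge_parabola[of s] pi_gt_zero by (auto simp: poly_lidstone_sym_1 field_simps)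
next
  case (Suc j)
  define C where "C = 2 / (3 * pi^(2*Suc j+1))"
  have C_pi: "C * pi^2 = 2 / (3 * pi^(2*j+1))"
    unfolding C_def using pi_gt_zero by (simp add: field_simps power_add power2_eq_square)
  let ?P = "lidstone_sym (Suc (Suc j))"
  let ?f = "\<lambda>s. C * sin (pi* s) - poly ?P s"
  let ?f' = "\<lambda>s. C * (cos (pi* s) * pi) - poly (pderiv ?P) s"
  let ?f'' = "\<lambda>s. - (C * pi^2) * sin (pi* s) - poly (pderiv (pderiv ?P)) s"
  have d1: "DERIV ?f x :> ?f' x" for x
    by (auto intro!: derivative_eq_intros)
  have d2: "DERIV ?f' x :> ?f'' x" for x
    by (auto intro!: derivative_eq_intros simp: power2_eq_square)
  have concave: "?f'' x \<le> 0" if "x \<in> {0..1}" for x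
    using Suc.IH[OF that] C_pi lidstone_sym_Suc(1)[of "Suc j"] by simp
  have "0 \<le> ?f s"
    using concave_vanishing_ends_nonneg[OF d1 d2 concave] Suc.prems by (simp add: lidstone_sym_Suc)
  then show ?case unfolding C_def by simp
qed

lemma lidstone_abs_pair_bound:
  assumes "s \<in> {0..1}"
  shows "\<bar>Lambda j s\<bar> + \<bar>Lambda j (1 - s)\<bar> \<le> 2 * pi / 3 / pi^(2*j)"
proof -
  have abs_signed: "\<bar>Lambda j t\<bar> = poly (lidstone_signed j) t" if "t \<in> {0..1}" for t
  proof -
    have "\<bar>Lambda j t\<bar> = \<bar>poly (lidstone_signed j) t\<bar>"
      by (simp add: lidstone_signed_def abs_mult)
    thus ?thesis using lidstone_signed_nonneg[OF that, of j] by simp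
  qed
  have sym: "\<bar>Lambda j s\<bar> + \<bar>Lambda j (1 - s)\<bar> = poly (lidstone_sym j) s"
    using abs_signed[OF assms] abs_signed[of "1 - s"] assms by (simp add: poly_lidstone_sym)
  show ?thesis
  proof (cases j)
    case 0
    then show ?thesis using sym lidstone_sym_0 pi_gt3 by simp
  next
    case (Suc i)
    have "poly (lidstone_sym j) s \<le> 2 / (3 * pi^(2*i+1)) * sin (pi* s)"
      using lidstone_sym_le_sin assms Suc by simp
    also have "\<dots> \<le> 2 / (3 * pi^(2*i+1))"
      using pi_gt_zero by (intro mult_left_le) auto
    also have "\<dots> = 2 * pi / 3 / pi^(2*j)"
      using Suc pi_gt_zero by (simp add: field_simps power_add)
    finally show ?thesis using sym by simp
  qed
qed

definition boundary_poly :: "real \<Rightarrow> real \<Rightarrow> nat \<Rightarrow> (nat \<Rightarrow> real) \<Rightarrow> (nat \<Rightarrow> real) \<Rightarrow> real poly" where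
  "boundary_poly a b p c d =
     (\<Sum>l=0..p. smult ((b - a)^(2*l))
        (smult (c l) (pcompose (lidstone l) [:b / (b - a), -1 / (b - a):])
         + smult (d l) (pcompose (lidstone l) [:- a / (b - a), 1 / (b - a):])))"

lemma poly_boundary_poly:
  "poly (boundary_poly a b p c d) x =
     (\<Sum>l=0..p. (c l * Lambda l ((b - x) / (b - a)) + d l * Lambda l ((x - a) / (b - a))) * (b - a)^(2*l))"
proof -
  have "b / (b - a) + x * (-1 / (b - a)) = (b - x) / (b - a)"
       "- a / (b - a) + x * (1 / (b - a)) = (x - a) / (b - a)"
    by (simp_all add: diff_divide_distrib)
  thus ?thesis
    unfolding boundary_poly_def by (simp add: poly_sum poly_pcompose mult.commute)
qed

lemma q_fun_eq_poly:
  "q_fun p N xs y n \<beta> = poly (boundary_poly (xs 0) (xs N) p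
        (\<lambda>l. a_coef xs N n ^ (2*l) * y (n - 1) (2*l)) (\<lambda>l. a_coef xs N n ^ (2*l) * y n (2*l))
      - smult \<beta> (boundary_poly (xs 0) (xs N) p (\<lambda>l. y 0 (2*l)) (\<lambda>l. y N (2*l))))"
  by (rule ext)
     (simp add: q_fun_def poly_boundary_poly sum_distrib_left sum_subtractf[symmetric] algebra_simps)

lemma deriv_affine_param:
  fixes A B :: "real poly"
  shows "deriv (\<lambda>\<beta>. poly ((pderiv ^^ m) (A - smult \<beta> B)) x) \<alpha> = - poly ((pderiv ^^ m) B) x"
  unfolding higher_pderiv_diff higher_pderiv_smult poly_diff poly_smult
  by (rule DERIV_imp_deriv) (auto intro!: derivative_eq_intros)

lemma sum_if_ge_shift:
  fixes g :: "nat \<Rightarrow> 'a :: comm_monoid_add"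
  assumes "k \<le> p"
  shows "(\<Sum>l=0..p. if k \<le> l then g l else 0) = (\<Sum>j=0..p-k. g (j + k))"
proof -
  have "(\<Sum>l=0..p. if k \<le> l then g l else 0) = (\<Sum>l\<in>{l\<in>{0..p}. k \<le> l}. g l)"
    by (rule sum.inter_filter[symmetric]) simp
  also have "{l\<in>{0..p}. k \<le> l} = {0 + k..(p - k) + k}" using assms by auto
  also have "(\<Sum>l\<in>{0 + k..(p - k) + k}. g l) = (\<Sum>j=0..p-k. g (j + k))"
    by (rule sum.shift_bounds_cl_nat_ivl)
  finally show ?thesis .
qed

lemma higher_pderiv_boundary_poly:
  assumes ab: "a < b" and k: "k \<le> p"
  shows "poly ((pderiv ^^ (2*k)) (boundary_poly a b p c d)) x =
     (\<Sum>j=0..p-k. (c (j + k) * Lambda j ((b - x) / (b - a)) + d (j + k) * Lambda j ((x - a) / (b - a)))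
        * (b - a)^(2*j))"
proof -
  define L where "L = b - a"
  have L: "L > 0" using ab by (simp add: L_def)
  have left: "poly [:b / L, -1 / L:] x = (b - x) / L" and right: "poly [:- a / L, 1 / L:] x = (x - a) / L"
    by (simp_all add: diff_divide_distrib)
  have scale: "(-1 / L)^(2*k) = 1 / L^(2*k)" "(1 / L)^(2*k) = 1 / L^(2*k)"
    by (simp_all add: power_mult power_divide)
  have shift: "L^(2*l) * (1 / L^(2*k)) = L^(2*(l - k))" if "k \<le> l" for l
  proof -
    have "L^(2*l) = L^(2*k) * L^(2*(l - k))"
      using that by (simp flip: power_add add: algebra_simps)
    thus ?thesis using L by simp
  qed
  have "poly ((pderiv ^^ (2*k)) (boundary_poly a b p c d)) x =
     (\<Sum>l=0..p. if k \<le> l then (c l * Lambda (l - k) ((b - x) / L) + d l * Lambda (l - k) ((x - a) / L))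
        * L^(2*(l - k)) else 0)"
    unfolding boundary_poly_def L_def[symmetric] higher_pderiv_sum poly_sum
  proof (intro sum.cong refl)
    fix l
    let ?lhs = "poly ((pderiv ^^ (2*k)) (smult (L^(2*l)) (smult (c l) (pcompose (lidstone l) [:b / L, -1 / L:])
            + smult (d l) (pcompose (lidstone l) [:- a / L, 1 / L:])))) x"
    have eval: "?lhs = L^(2*l) * (1 / L^(2*k)) *
        (c l * poly ((pderiv ^^ (2*k)) (lidstone l)) ((b - x) / L)
         + d l * poly ((pderiv ^^ (2*k)) (lidstone l)) ((x - a) / L))"
      by (simp only: higher_pderiv_add higher_pderiv_smult higher_pderiv_pcompose_affine
          poly_add poly_smult poly_pcompose left right scale) (simp add: algebra_simps)
    show "?lhs = (if k \<le> l then (c l * Lambda (l - k) ((b - x) / L) + d l * Lambda (l - k) ((x - a) / L))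
            * L^(2*(l - k)) else 0)"
    proof (cases "k \<le> l")
      case True
      then show ?thesis unfolding eval higher_pderiv_lidstone shift[OF True] by (simp add: mult.commute)
    next
      case False
      then show ?thesis unfolding eval higher_pderiv_lidstone by simp
    qed
  qed
  also have "\<dots> = (\<Sum>j=0..p-k. (c (j + k) * Lambda j ((b - x) / L) + d (j + k) * Lambda j ((x - a) / L))
        * L^(2*j))"
    using sum_if_ge_shift[OF k, where g = "\<lambda>l. (c l * Lambda (l - k) ((b - x) / L)
      + d l * Lambda (l - k) ((x - a) / L)) * L^(2*(l - k))"] by simp
  finally show ?thesis unfolding L_def .
qed

lemma boundary_poly_higher_deriv_bound:
  assumes ab: "a < b" and k: "k \<le> p" and x: "x \<in> {a..b}"
    and c: "\<And>l. l \<le> p \<Longrightarrow> \<bar>c l\<bar> \<le> M" and d: "\<And>l. l \<le> p \<Longrightarrow> \<bar>d l\<bar> \<le> M"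
  shows "\<bar>poly ((pderiv ^^ (2*k)) (boundary_poly a b p c d)) x\<bar>
           \<le> 2 * M * pi / 3 * (\<Sum>j=0..p-k. ((b - a) / pi)^(2*j))"
proof -
  define L where "L = b - a"
  define u where "u = (x - a) / L"
  have L: "L > 0" using ab by (simp add: L_def)
  have u: "u \<in> {0..1}" using x L by (auto simp: u_def L_def field_simps)
  have u': "(b - x) / L = 1 - u" using L by (simp add: u_def L_def field_simps)
  have M: "0 \<le> M" using c[of 0] by simp
  have summand_bound: "\<bar>(c (j + k) * Lambda j (1 - u) + d (j + k) * Lambda j u) * L^(2*j)\<bar>
                \<le> 2 * M * pi / 3 * (L / pi)^(2*j)" if "j \<in> {0..p-k}" for j
  proof -
    have jk: "j + k \<le> p" using that k by simp
    have "\<bar>c (j + k) * Lambda j (1 - u) + d (j + k) * Lambda j u\<bar>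
          \<le> \<bar>c (j + k)\<bar> * \<bar>Lambda j (1 - u)\<bar> + \<bar>d (j + k)\<bar> * \<bar>Lambda j u\<bar>"
      by (metis abs_mult abs_triangle_ineq)
    also have "\<dots> \<le> M * \<bar>Lambda j (1 - u)\<bar> + M * \<bar>Lambda j u\<bar>"
      using c[OF jk] d[OF jk] by (intro add_mono mult_right_mono) auto
    also have "\<dots> = M * (\<bar>Lambda j u\<bar> + \<bar>Lambda j (1 - u)\<bar>)"
      by (simp add: algebra_simps)
    also have "\<dots> \<le> M * (2 * pi / 3 / pi^(2*j))"
      using lidstone_abs_pair_bound[OF u] M by (intro mult_left_mono)
    finally have "\<bar>c (j + k) * Lambda j (1 - u) + d (j + k) * Lambda j u\<bar> * L^(2*j)
                    \<le> M * (2 * pi / 3 / pi^(2*j)) * L^(2*j)"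
      using L by (intro mult_right_mono) auto
    thus ?thesis using L by (simp add: abs_mult power_divide)
  qed
  have "\<bar>poly ((pderiv ^^ (2*k)) (boundary_poly a b p c d)) x\<bar>
          \<le> (\<Sum>j=0..p-k. \<bar>(c (j + k) * Lambda j (1 - u) + d (j + k) * Lambda j u) * L^(2*j)\<bar>)"
    unfolding higher_pderiv_boundary_poly[OF ab k] L_def[symmetric] u_def[symmetric] u'
    by (rule sum_abs)
  also have "\<dots> \<le> (\<Sum>j=0..p-k. 2 * M * pi / 3 * (L / pi)^(2*j))"
    by (rule sum_mono) (rule summand_bound)
  finally show ?thesis by (simp add: sum_distrib_left L_def)
qed

lemma first_node_lt_last:
  assumes "\<And>i. i < N \<Longrightarrow> xs i < xs (Suc i)" "0 < N"
  shows "xs 0 < (xs N :: real)"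
  using assms
proof (induction N)
  case (Suc m)
  then show ?case by (cases "m = 0") (auto intro: less_trans)
qed simp

lemma abs_le_rho:
  assumes "l \<le> p"
  shows "\<bar>y 0 (2*l)\<bar> \<le> rho y p N" "\<bar>y N (2*l)\<bar> \<le> rho y p N"
proof -
  have "max \<bar>y 0 (2*l)\<bar> \<bar>y N (2*l)\<bar> \<le> rho y p N"
    unfolding rho_def by (rule Max_ge) (use assms in auto)
  thus "\<bar>y 0 (2*l)\<bar> \<le> rho y p N" "\<bar>y N (2*l)\<bar> \<le> rho y p N" by auto
qed

theorem proposition4p1:
  fixes p N :: nat and xs :: "nat \<Rightarrow> real" and y :: "nat \<Rightarrow> nat \<Rightarrow> real"
    and n k :: nat and \<alpha> x :: real
  assumes incr: "\<And>i. i < N \<Longrightarrow> xs i < xs (Suc i)"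
    and n: "1 \<le> n" "n \<le> N"
    and k: "k \<le> p"
    and x: "x \<in> {xs 0..xs N}"
  shows "\<bar>deriv (\<lambda>\<beta>. ((deriv ^^ (2*k)) (\<lambda>t. q_fun p N xs y n \<beta> t)) x) \<alpha>\<bar>
           \<le> 2 * rho y p N * pi / 3 * (\<Sum>l=0..p-k. ((xs N - xs 0) / pi) ^ (2*l))"
proof -
  have nodes: "xs 0 < xs N" using first_node_lt_last[of N xs] incr n by simp
  define B where "B = boundary_poly (xs 0) (xs N) p (\<lambda>l. y 0 (2*l)) (\<lambda>l. y N (2*l))"
  have "deriv (\<lambda>\<beta>. ((deriv ^^ (2*k)) (\<lambda>t. q_fun p N xs y n \<beta> t)) x) \<alpha>
          = - poly ((pderiv ^^ (2*k)) B) x"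
    unfolding q_fun_eq_poly higher_deriv_poly B_def by (rule deriv_affine_param)
  moreover have "\<bar>poly ((pderiv ^^ (2*k)) B) x\<bar>
                   \<le> 2 * rho y p N * pi / 3 * (\<Sum>l=0..p-k. ((xs N - xs 0) / pi) ^ (2*l))"
    unfolding B_def using nodes k x abs_le_rho by (intro boundary_poly_higher_deriv_bound) auto
  ultimately show ?thesis by simp
qed

end
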